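(* Let $X$ be a $\mathsf{T_{z}S}$-closed semigroup and $e\in E(X)$ an idempotent such that the semigroup $H_e\cap Z(X)$ is bounded. Then for every sequence $(x_n)_{n\in\omega}$ of elements of $\big(\sqrt[\infty]{e}\cap Z(X)\big)\setminus H_e$ there exists $n\in\omega$ such that $x_n\notin\{x_{n+1}^p:p\ge 2\}$.
   Context: $\mathsf{T_{z}S}$ is the class of Hausdorff zero-dimensional topological semigroups; a semigroup $X$ is $\mathsf{T_{z}S}$-closed if for every isomorphic topological embedding of $X$ (discrete topology) into some $Y\in\mathsf{T_{z}S}$ the image is closed in $Y$. $E(X)$: idempotents; $H_e$: maximal subgroup containing $e$; $Z(X)$: center. $\sqrt[\infty]{e}=\{x\in X:\exists n\in\mathbb N\ (x^n=e)\}$. A semigroup is bounded if there is $n\ge1$ with $x^n$ idempotent for all $x$. *)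

theory Defs
  imports "HOL-Analysis.Analysis"
begin

text \<open>Powers x^n (n \<ge> 1) in a semigroup: spow x n = x^n for n \<ge> 1 (spow x 0 = x is a dummy value).\<close>
fun spow :: "'a::semigroup_mult \<Rightarrow> nat \<Rightarrow> 'a" where
  "spow x 0 = x"
| "spow x (Suc 0) = x"
| "spow x (Suc (Suc n)) = spow x (Suc n) * x"

definition idempotents :: "'a::semigroup_mult set" where
  "idempotents = {e. e * e = e}"

definition maxsubgroup :: "'a::semigroup_mult \<Rightarrow> 'a set" where
  "maxsubgroup e = {x. e * x = x \<and> x * e = x \<and>
      (\<exists>y. e * y = y \<and> y * e = y \<and> x * y = e \<and> y * x = e)}"

definition center :: "'a::semigroup_mult set" where
  "center = {z. \<forall>x. z * x = x * z}"

definition inf_root :: "'a::semigroup_mult \<Rightarrow> 'a set" where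
  "inf_root e = {x. \<exists>n\<ge>1. spow x n = e}"

definition bounded_subsemigroup :: "'a::semigroup_mult set \<Rightarrow> bool" where
  "bounded_subsemigroup S \<longleftrightarrow> (\<exists>n\<ge>1. \<forall>x\<in>S. spow x n * spow x n = spow x n)"

definition TzS :: "'b topology \<Rightarrow> ('b \<Rightarrow> 'b \<Rightarrow> 'b) \<Rightarrow> bool" where
  "TzS T m \<longleftrightarrow>
     (\<forall>a\<in>topspace T. \<forall>b\<in>topspace T. \<forall>c\<in>topspace T. m (m a b) c = m a (m b c)) \<and>
     continuous_map (prod_topology T T) T (\<lambda>(a, b). m a b) \<and>
     Hausdorff_space T \<and> T dim_le 0"

text \<open>The target semigroups are taken on the carrier
  type 'a set set (enough room).\<close>
definition TzS_closed :: "'a::semigroup_mult itself \<Rightarrow> bool" where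
  "TzS_closed _ \<longleftrightarrow>
     (\<forall>(T :: 'a set set topology) m (h :: 'a \<Rightarrow> 'a set set).
        TzS T m \<and> (\<forall>x y. h (x * y) = m (h x) (h y)) \<and>
        embedding_map (discrete_topology UNIV) T h
        \<longrightarrow> closedin T (range h))"

end

(*
  Suppose x_n = x_(n+1)^(p_n) with p_n >= 2 for every n. For each n the element x_n e lies in
  H_e \<inter> Z(X), so its N-th power is e, where N is an exponent of that group; and the exponents
  Q(a,b) = p_a ... p_(b-1) grow at least like 2^(b-a). Suitable powers of the x_n therefore give
  central elements u_j outside H_e with u_j u_k = e and u_k = D_jk u_j for roots D_jk of e.
  Adjoining to X one limit point for every sequence (u_j y)_j that is not eventually constant
  gives a Hausdorff zero-dimensional topological semigroup in which the discrete semigroup X is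
  not closed: the limit of (u_j)_j lies in its closure.
*)

theory Submission
  imports Defs
begin


section \<open>Powers and roots in a semigroup\<close>

lemma spow_Suc: "n \<ge> 1 \<Longrightarrow> spow a (Suc n) = spow a n * a"
  by (cases n) auto

lemma spow_add:
  assumes "i \<ge> 1" and "j \<ge> 1"
  shows "spow a (i + j) = spow a i * spow a j"
  using assms(2)
proof (induction j rule: nat_induct_at_least)
  case base
  show ?case using spow_Suc[OF assms(1)] by simp
next
  case (Suc n)
  then show ?case using assms(1) by (simp add: spow_Suc mult.assoc)
qed

lemma spow_mult:
  assumes "i \<ge> 1" and "j \<ge> 1"
  shows "spow (spow a i) j = spow a (i * j)"
  using assms(2)
proof (induction j rule: nat_induct_at_least)
  case (Suc n)
  have "spow (spow a i) (Suc n) = spow a (i * n) * spow a i"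
    using Suc by (simp add: spow_Suc)
  also have "\<dots> = spow a (i * Suc n)"
    using spow_add[of "i * n" i a] Suc assms(1) by (simp add: add.commute)
  finally show ?case .
qed simp

lemma spow_commute: "b * z = z * b \<Longrightarrow> spow b n * z = z * spow b n"
proof (induction b n rule: spow.induct)
  case (3 x n)
  have "spow x (Suc (Suc n)) * z = spow x (Suc n) * (x * z)" by (simp add: mult.assoc)
  also have "\<dots> = (spow x (Suc n) * z) * x" using 3 by (metis mult.assoc)
  also have "\<dots> = z * spow x (Suc (Suc n))" using 3 by (simp add: mult.assoc)
  finally show ?case .
qed auto

lemma spow_idem: "e * e = e \<Longrightarrow> spow e n = e"
  by (induction e n rule: spow.induct) auto

lemma spow_mult_distrib:
  assumes "a * b = b * a"
  shows "spow (a * b) n = spow a n * spow b n"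
proof (induction n)
  case (Suc n)
  show ?case
  proof (cases "n = 0")
    case False
    have "spow b n * a = a * spow b n" using spow_commute assms by metis
    then have "spow a n * spow b n * (a * b) = spow a n * a * (spow b n * b)"
      by (metis mult.assoc)
    then show ?thesis using Suc False by (simp add: spow_Suc)
  qed simp
qed simp

lemma inf_root_fixes:
  assumes "c \<in> inf_root e" and "c * v = v"
  shows "e * v = v"
proof -
  obtain K where K: "K \<ge> 1" "spow c K = e" using assms(1) by (auto simp: inf_root_def)
  have "spow c (Suc n) * v = v" for n
  proof (induction n)
    case (Suc n)
    have "spow c (Suc (Suc n)) * v = spow c (Suc n) * (c * v)" by (simp add: mult.assoc)
    then show ?case using Suc assms(2) by simp
  qed (use assms in simp)
  from this[of "K - 1"] K show ?thesis by simp
qed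

lemma spow_in_inf_root:
  assumes "e * e = e" and "a \<in> inf_root e" and "i \<ge> 1"
  shows "spow a i \<in> inf_root e"
proof -
  obtain K where K: "K \<ge> 1" "spow a K = e" using assms(2) by (auto simp: inf_root_def)
  have "spow (spow a i) K = spow (spow a K) i"
    using spow_mult[of i K a] spow_mult[of K i a] assms(3) K(1) by (simp add: mult.commute)
  also have "\<dots> = e" using K spow_idem assms(1) by simp
  finally show ?thesis using K(1) by (auto simp: inf_root_def)
qed

lemma inf_root_commute_imp_commute:
  assumes "a \<in> inf_root e" and "\<And>w. a * w = w * a"
  shows "e * w = w * e"
proof -
  obtain K where "spow a K = e" using assms(1) by (auto simp: inf_root_def)
  then show ?thesis using spow_commute[of a w K] assms(2) by simp
qed

lemma spow_fixed_mono:
  assumes "\<And>w. e * w = w * e" and "i \<ge> 1" and "i \<le> j" and "spow a i * e = spow a i"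
  shows "spow a j * e = spow a j"
proof (cases "i = j")
  case False
  then have j: "j = i + (j - i)" "j - i \<ge> 1" using assms by auto
  have "spow a j * e = spow a i * (spow a (j - i) * e)"
    using spow_add[OF assms(2) j(2)] j(1) by (metis mult.assoc)
  also have "\<dots> = (spow a i * e) * spow a (j - i)" using assms(1) by (metis mult.assoc)
  also have "\<dots> = spow a j" using assms(4) spow_add[OF assms(2) j(2)] j(1) by metis
  finally show ?thesis .
qed (use assms in simp)

lemma central_root_in_maxsubgroup:
  assumes idem: "e * e = e" and root: "z \<in> inf_root e" and central: "\<And>w. z * w = w * z"
    and fixed: "z * e = z"
  shows "z \<in> maxsubgroup e"
proof -
  obtain K where K: "K \<ge> 1" "spow z K = e" using root by (auto simp: inf_root_def)
  have ec: "e * w = w * e" for w using inf_root_commute_imp_commute root central .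
  define s where "s = spow z (2 * K - 1)"
  have zs: "z * s = e"
  proof -
    have "z * s = spow z (K * 2)"
      using spow_add[of 1 "2 * K - 1" z] K(1) by (simp add: s_def mult.commute)
    also have "\<dots> = e" using spow_mult[of K 2 z] K idem by (simp add: numeral_2_eq_2)
    finally show ?thesis .
  qed
  have ez: "e * z = z" using ec fixed by metis
  have "e * (s * e) = s * e" by (metis ec idem mult.assoc)
  moreover have "s * e * e = s * e" by (simp add: mult.assoc idem)
  moreover have "z * (s * e) = e" by (simp add: zs idem flip: mult.assoc)
  moreover have "s * e * z = e" using zs central[of s] by (simp add: ez mult.assoc)
  ultimately show ?thesis using fixed ez unfolding maxsubgroup_def by blast
qed

lemma central_root_not_fixed:
  assumes "e * e = e" and "z \<in> inf_root e" and "\<And>w. z * w = w * z" and "z \<notin> maxsubgroup e"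
  shows "z * e \<noteq> z"
  using central_root_in_maxsubgroup assms by blast

lemma spow_exponent_mult_e:
  assumes idem: "e * e = e" and "N \<ge> 1"
    and bound: "\<forall>g \<in> maxsubgroup e \<inter> center. spow g N * spow g N = spow g N"
    and root: "z \<in> inf_root e" and central: "\<And>w. z * w = w * z" and "t \<ge> 1"
  shows "spow z (N * t) * e = e"
proof -
  obtain K where K: "K \<ge> 1" "spow z K = e" using root by (auto simp: inf_root_def)
  have ec: "e * w = w * e" for w using inf_root_commute_imp_commute root central .
  \<comment> \<open>z e lies in the group H_e, whose only idempotent is e\<close>
  define g where "g = z * e"
  have g_pow: "spow g j = spow z j * e" for j
    using spow_mult_distrib[of z e j] ec[of z] spow_idem[OF idem] by (simp add: g_def)
  have gK: "spow g K = e" using g_pow K idem by simp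
  have g_root: "g \<in> inf_root e" using gK K(1) by (auto simp: inf_root_def)
  have g_central: "g * w = w * g" for w
    unfolding g_def using central ec by (metis mult.assoc)
  have "g \<in> maxsubgroup e"
    by (rule central_root_in_maxsubgroup[OF idem g_root g_central]) (simp add: g_def mult.assoc idem)
  moreover have "g \<in> center" using g_central by (simp add: center_def)
  ultimately have "spow g N * spow g N = spow g N" using bound by blast
  then have "spow g N = spow (spow g N) K" using spow_idem by metis
  also have "\<dots> = spow (spow g K) N"
    using spow_mult[of N K g] spow_mult[of K N g] \<open>N \<ge> 1\<close> K(1)
      by (simp add: mult.commute)
  also have "\<dots> = e" using gK spow_idem[OF idem] by simp
  finally have gN: "spow g N = e" .
  have "spow z (N * t) * e = spow (spow g N) t"
    using g_pow spow_mult[of N t g] assms(2,6) by simp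
  then show ?thesis using gN spow_idem[OF idem] by simp
qed


section \<open>Changing the carrier of a topological semigroup\<close>

lemma homeomorphic_maps_pullback_inv:
  assumes "inj f"
  shows "homeomorphic_maps T (pullback_topology (f ` topspace T) (inv f) T) f (inv f)"
  unfolding homeomorphic_maps_def
proof (intro conjI ballI)
  show "continuous_map T (pullback_topology (f ` topspace T) (inv f) T) f"
    by (rule continuous_map_pullback') (auto simp: assms o_def)
  show "continuous_map (pullback_topology (f ` topspace T) (inv f) T) T (inv f)"
    using continuous_map_pullback[OF continuous_map_id, of "f ` topspace T" "inv f"] by simp
  show "inv f (f x) = x" for x by (simp add: assms)
  show "f (inv f y) = y" if "y \<in> topspace (pullback_topology (f ` topspace T) (inv f) T)" for y
    using that by (auto simp: topspace_pullback_topology assms)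
qed

lemma TzS_homeomorphic_maps:
  assumes TzS: "TzS T m" and hom: "homeomorphic_maps T T' f g"
  shows "TzS T' (\<lambda>a b. f (m (g a) (g b)))"
  unfolding TzS_def
proof (intro conjI ballI)
  have cm: "continuous_map (prod_topology T T) T (\<lambda>(a, b). m a b)"
    using TzS unfolding TzS_def by blast
  have cf: "continuous_map T T' f" and cg: "continuous_map T' T g"
    using hom by (auto simp: homeomorphic_maps_def)
  have sp: "T homeomorphic_space T'" using hom unfolding homeomorphic_space_def by blast
  fix a b c assume abc: "a \<in> topspace T'" "b \<in> topspace T'" "c \<in> topspace T'"
  then have g: "g a \<in> topspace T" "g b \<in> topspace T" "g c \<in> topspace T"
    using cg by (auto simp: continuous_map_def)
  have m_top: "m x y \<in> topspace T" if "x \<in> topspace T" "y \<in> topspace T" for x y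
    using cm that by (force simp: continuous_map_def)
  have gf: "g (f z) = z" if "z \<in> topspace T" for z
    using hom that by (simp add: homeomorphic_maps_def)
  have "m (m (g a) (g b)) (g c) = m (g a) (m (g b) (g c))"
    using TzS g unfolding TzS_def by blast
  then show "f (m (g (f (m (g a) (g b)))) (g c)) = f (m (g a) (g (f (m (g b) (g c)))))"
    using g by (simp add: gf m_top)
next
  have cm: "continuous_map (prod_topology T T) T (\<lambda>(a, b). m a b)"
    using TzS unfolding TzS_def by blast
  have cf: "continuous_map T T' f" and cg: "continuous_map T' T g"
    using hom by (auto simp: homeomorphic_maps_def)
  have "continuous_map (prod_topology T' T') (prod_topology T T) (\<lambda>p. (g (fst p), g (snd p)))"
    by (intro continuous_map_pairedI continuous_map_compose[OF _ cg, unfolded o_def]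
        continuous_map_fst continuous_map_snd)
  then have "continuous_map (prod_topology T' T') T ((\<lambda>(a, b). m a b) \<circ> (\<lambda>p. (g (fst p), g (snd p))))"
    using cm by (rule continuous_map_compose)
  then have "continuous_map (prod_topology T' T') T' (f \<circ> ((\<lambda>(a, b). m a b) \<circ> (\<lambda>p. (g (fst p), g (snd p)))))"
    using cf by (rule continuous_map_compose)
  then show "continuous_map (prod_topology T' T') T' (\<lambda>(a, b). f (m (g a) (g b)))"
    by (simp add: o_def case_prod_unfold)
next
  have sp: "T homeomorphic_space T'" using hom unfolding homeomorphic_space_def by blast
  show "Hausdorff_space T'" using TzS homeomorphic_Hausdorff_space[OF sp] by (simp add: TzS_def)
  show "T' dim_le 0" using TzS homeomorphic_space_dimension_le[OF sp] by (simp add: TzS_def)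
qed

text \<open>TzS_closed only quantifies over topological semigroups carried by the type
  'a set set; an injection into that type transports any other witness.\<close>
lemma not_TzS_closedI:
  fixes h :: "'a::semigroup_mult \<Rightarrow> 'c" and f :: "'c \<Rightarrow> 'a set set"
  assumes TzS: "TzS T m" and hom: "\<And>x y. h (x * y) = m (h x) (h y)"
    and emb: "embedding_map (discrete_topology UNIV) T h" and not_closed: "\<not> closedin T (range h)"
    and "inj f"
  shows "\<not> TzS_closed TYPE('a)"
proof
  define A where "A = f ` topspace T"
  let ?T = "pullback_topology A (inv f) T"
  have maps: "homeomorphic_maps T ?T f (inv f)"
    unfolding A_def by (rule homeomorphic_maps_pullback_inv[OF \<open>inj f\<close>])
  then have hmap: "homeomorphic_map T ?T f" by (auto simp: homeomorphic_map_maps)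
  have "h ` topspace (discrete_topology UNIV) =
      topspace (subtopology T (h ` topspace (discrete_topology UNIV)))"
    using emb unfolding embedding_map_def by (rule homeomorphic_imp_surjective_map)
  then have range_h: "range h \<subseteq> topspace T"
    by (simp only: topspace_subtopology topspace_discrete_topology) blast
  assume "TzS_closed TYPE('a)"
  moreover have "TzS ?T (\<lambda>a b. f (m (inv f a) (inv f b)))"
    by (rule TzS_homeomorphic_maps[OF TzS maps])
  moreover have "(f \<circ> h) (x * y) = f (m (inv f ((f \<circ> h) x)) (inv f ((f \<circ> h) y)))" for x y
    by (simp add: hom \<open>inj f\<close>)
  moreover have "embedding_map (discrete_topology UNIV) ?T (f \<circ> h)"
  proof (rule embedding_map_compose[OF emb])
    have "A = topspace ?T"
      using homeomorphic_imp_surjective_map[OF hmap] by (simp only: A_def[symmetric])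
    then have "subtopology ?T A = subtopology ?T (topspace ?T)" by (rule arg_cong)
    then have "subtopology ?T (f ` topspace T) = ?T"
      by (simp only: A_def[symmetric] subtopology_topspace)
    then show "embedding_map T ?T f" using hmap by (simp only: embedding_map_def)
  qed
  ultimately have "closedin ?T (range (f \<circ> h))"
    unfolding TzS_closed_def by blast
  then show False
    using homeomorphic_map_closedness[OF hmap range_h] not_closed by (simp add: image_comp)
qed

definition option_to_set :: "'a option \<Rightarrow> 'a set" where
  "option_to_set y = (case y of None \<Rightarrow> {} | Some a \<Rightarrow> {a})"

lemma inj_option_to_set: "inj option_to_set"
  unfolding inj_def option_to_set_def by (auto split: option.splits)

text \<open>The doubleton {a, b} is neither a singleton nor the image of an option, so it tags
  the right summand.\<close>
definition sum_to_set_set :: "'a \<Rightarrow> 'a \<Rightarrow> 'a + 'a option set \<Rightarrow> 'a set set" where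
  "sum_to_set_set a b y =
     (case y of Inl x \<Rightarrow> {{x}} | Inr S \<Rightarrow> insert {a, b} (option_to_set ` S))"

lemma inj_sum_to_set_set:
  assumes ab: "a \<noteq> b"
  shows "inj (sum_to_set_set a b)"
proof (rule injI)
  have not_option: "{a, b} \<notin> option_to_set ` S" for S
    using ab by (auto simp: option_to_set_def doubleton_eq_iff split: option.splits)
  fix y z assume eq: "sum_to_set_set a b y = sum_to_set_set a b z"
  show "y = z"
  proof (cases y; cases z)
    fix S S' assume "y = Inr S" "z = Inr S'"
    then have "insert {a, b} (option_to_set ` S) = insert {a, b} (option_to_set ` S')"
      using eq by (simp add: sum_to_set_set_def)
    then have "option_to_set ` S = option_to_set ` S'"
      using not_option[of S] not_option[of S'] by (metis insert_ident)
    then have "S = S'" by (rule inj_image_eq_iff[OF inj_option_to_set, THEN iffD1])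
    then show ?thesis using \<open>y = Inr S\<close> \<open>z = Inr S'\<close> by simp
  next
    fix x S assume "y = Inl x" "z = Inr S"
    then have "{a, b} = {x}" using eq by (auto simp: sum_to_set_set_def)
    then show ?thesis using ab by (simp add: doubleton_eq_iff)
  next
    fix x S assume "y = Inr S" "z = Inl x"
    then have "{a, b} = {x}" using eq by (auto simp: sum_to_set_set_def)
    then show ?thesis using ab by (simp add: doubleton_eq_iff)
  qed (use eq in \<open>simp add: sum_to_set_set_def\<close>)
qed


section \<open>Adjoining limits of the sequences (u_j y)_j\<close>

text \<open>X with an identity adjoined is modelled by 'a option, None being the identity.\<close>
fun act1 :: "'a::semigroup_mult \<Rightarrow> 'a option \<Rightarrow> 'a" where
  "act1 a None = a" | "act1 a (Some y) = a * y"

fun mult1 :: "'a::semigroup_mult option \<Rightarrow> 'a option \<Rightarrow> 'a option" where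
  "mult1 None z = z" | "mult1 (Some y) None = Some y" | "mult1 (Some y) (Some z) = Some (y * z)"

lemma act1_act1: "act1 (act1 a y) z = act1 a (mult1 y z)"
  by (cases y; cases z) (auto simp: mult.assoc)

lemma act1_mult: "act1 (a * b) y = a * act1 b y"
  by (cases y) (auto simp: mult.assoc)

locale limit_extension =
  fixes e :: "'a::semigroup_mult" and u :: "nat \<Rightarrow> 'a" and D :: "nat \<Rightarrow> nat \<Rightarrow> 'a"
  assumes idem: "e * e = e"
    and e_central: "\<And>z. e * z = z * e"
    and u_central: "\<And>j z. u j * z = z * u j"
    and u_mult_u: "\<And>j i. u j * u i = e"
    and u_step: "\<And>j i. j < i \<Longrightarrow> u i = D j i * u j"
    and D_mult_e: "\<And>j i. j < i \<Longrightarrow> D j i * e = e"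
    and D_root: "\<And>j i. j < i \<Longrightarrow> D j i \<in> inf_root e"
    and u_not_fixed: "\<And>j. u j * e \<noteq> u j"
    and D_comparable: "\<And>j k j' k'. j < k \<Longrightarrow> j < j' \<Longrightarrow> k < k' \<Longrightarrow>
        \<exists>c. c \<in> inf_root e \<and> (D k k' = c * D j j' \<or> D j j' = c * D k k')"
begin

definition useq :: "'a option \<Rightarrow> nat \<Rightarrow> 'a" where
  "useq y j = act1 (u j) y"

definition ev_const :: "'a option \<Rightarrow> bool" where
  "ev_const y \<longleftrightarrow> (\<exists>c. \<forall>\<^sub>F j in sequentially. useq y j = c)"

definition ev_eq :: "'a option \<Rightarrow> 'a option \<Rightarrow> bool" where
  "ev_eq y z \<longleftrightarrow> (\<forall>\<^sub>F j in sequentially. useq y j = useq z j)"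

definition eq_class :: "'a option \<Rightarrow> 'a option set" where
  "eq_class y = {z. ev_eq z y}"

definition const_value :: "'a option \<Rightarrow> 'a" where
  "const_value y = (SOME c. \<forall>\<^sub>F j in sequentially. useq y j = c)"

definition repr :: "'a option set \<Rightarrow> 'a option" where
  "repr S = (SOME y. y \<in> S)"

text \<open>The extension has a point Inl x for every x in X and a new point Inr S for every class S
  of eventually equal sequences (u_j y)_j that are not eventually constant; point y is the
  limit of (u_j y)_j.\<close>
definition point :: "'a option \<Rightarrow> 'a + 'a option set" where
  "point y = (if ev_const y then Inl (const_value y) else Inr (eq_class y))"

definition ext_carrier :: "('a + 'a option set) set" where
  "ext_carrier = range Inl \<union> {Inr (eq_class y) | y. \<not> ev_const y}"

fun ext_mult :: "'a + 'a option set \<Rightarrow> 'a + 'a option set \<Rightarrow> 'a + 'a option set" where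
  "ext_mult (Inl x) (Inl x') = Inl (x * x')"
| "ext_mult (Inl x) (Inr S) = point (mult1 (Some x) (repr S))"
| "ext_mult (Inr S) (Inl x) = point (mult1 (repr S) (Some x))"
| "ext_mult (Inr S) (Inr S') = Inl (act1 e (mult1 (repr S) (repr S')))"

fun ext_seq :: "'a + 'a option set \<Rightarrow> nat \<Rightarrow> 'a" where
  "ext_seq (Inl x) j = x" | "ext_seq (Inr S) j = useq (repr S) j"

lemma useq_step: "j < i \<Longrightarrow> useq y i = D j i * useq y j"
  using u_step by (simp add: useq_def act1_mult)

lemma ev_constI:
  assumes "e * useq y a = useq y a" shows "ev_const y"
proof -
  have "useq y l = useq y a" if "l \<ge> a" for l
  proof (cases "l = a")
    case False
    then have "a < l" using that by simp
    then have "useq y l = D a l * (e * useq y a)" using useq_step assms by simp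
    also have "\<dots> = (D a l * e) * useq y a" by (simp add: mult.assoc)
    also have "\<dots> = useq y a" using D_mult_e \<open>a < l\<close> assms by simp
    finally show ?thesis .
  qed simp
  then show ?thesis unfolding ev_const_def eventually_sequentially by blast
qed

lemma ev_const_if_repeat: "a < b \<Longrightarrow> useq y a = useq y b \<Longrightarrow> ev_const y"
  using useq_step[of a b y] D_root[of a b] inf_root_fixes ev_constI by metis

lemma not_ev_const_avoids: assumes "\<not> ev_const y" shows "\<exists>J. \<forall>j\<ge>J. useq y j \<noteq> x"
proof (cases "\<exists>a. useq y a = x")
  case True
  then obtain a where a: "useq y a = x" by blast
  have "useq y j \<noteq> x" if "j \<ge> Suc a" for j
    using ev_const_if_repeat[of a j y] a assms that by auto
  then show ?thesis by blast
qed auto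

lemma not_ev_const_eventually_neq: "\<not> ev_const y \<Longrightarrow> \<forall>\<^sub>F j in sequentially. useq y j \<noteq> x"
  using not_ev_const_avoids unfolding eventually_sequentially by blast

lemma not_ev_const_finite_preimage: assumes "\<not> ev_const y" shows "finite {j. useq y j = x}"
proof -
  obtain J where "\<forall>j\<ge>J. useq y j \<noteq> x" using not_ev_const_avoids assms by blast
  then have "{j. useq y j = x} \<subseteq> {..<J}"
    by (metis (mono_tags) lessThan_iff mem_Collect_eq not_le subsetI)
  then show ?thesis using finite_subset by blast
qed

lemma useq_mult1_left: "useq (mult1 (Some x) y) j = x * useq y j"
proof -
  have "useq (mult1 (Some x) y) j = act1 (act1 (u j) (Some x)) y" by (simp only: useq_def act1_act1)
  also have "\<dots> = act1 (x * u j) y" using u_central by simp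
  also have "\<dots> = x * useq y j" by (simp add: act1_mult useq_def)
  finally show ?thesis .
qed

lemma useq_mult1_right: "useq (mult1 y (Some x)) j = useq y j * x"
  by (simp add: useq_def flip: act1_act1)

lemma useq_mult_useq: "useq y j * useq z k = act1 e (mult1 y z)"
proof -
  have "act1 (u j) y * act1 (u k) z = act1 (u j * u k) (mult1 y z)"
  proof (cases y; cases z)
    fix a assume "y = Some a" "z = None"
    then show ?thesis using u_central[of k a] by (simp add: mult.assoc)
  next
    fix a b assume "y = Some a" "z = Some b"
    then show ?thesis using u_central[of k a] by (simp add: mult.assoc) (metis mult.assoc)
  qed (auto simp: mult.assoc)
  then show ?thesis by (simp add: useq_def u_mult_u)
qed

lemma ev_eq_refl: "ev_eq y y" by (simp add: ev_eq_def)
lemma ev_eq_sym: "ev_eq y z \<Longrightarrow> ev_eq z y" by (simp add: ev_eq_def eq_commute)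
lemma ev_eq_trans: assumes "ev_eq y z" "ev_eq z w" shows "ev_eq y w"
  using assms unfolding ev_eq_def by eventually_elim simp

lemma ev_eq_ev_const: assumes "ev_eq y z" "ev_const y" shows "ev_const z"
proof -
  obtain c where c: "\<forall>\<^sub>F j in sequentially. useq y j = c"
    using assms(2) by (auto simp: ev_const_def)
  have "\<forall>\<^sub>F j in sequentially. useq z j = c"
    using c assms(1) unfolding ev_eq_def by eventually_elim simp
  then show ?thesis by (auto simp: ev_const_def)
qed

lemma eq_class_eqI: "ev_eq y z \<Longrightarrow> eq_class y = eq_class z"
  unfolding eq_class_def using ev_eq_trans ev_eq_sym by blast

lemma repr_eq_class: "ev_eq (repr (eq_class y)) y"
proof -
  have "y \<in> eq_class y" by (simp add: eq_class_def ev_eq_refl)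
  then have "repr (eq_class y) \<in> eq_class y" unfolding repr_def by (rule someI)
  then show ?thesis by (simp add: eq_class_def)
qed

lemma const_value: "ev_const y \<Longrightarrow> \<forall>\<^sub>F j in sequentially. useq y j = const_value y"
  unfolding ev_const_def const_value_def by (rule someI_ex)

lemma Inr_in_carrierD: assumes "Inr S \<in> ext_carrier" shows "\<not> ev_const (repr S)" "eq_class (repr S) = S"
proof -
  obtain y where y: "S = eq_class y" "\<not> ev_const y" using assms by (auto simp: ext_carrier_def)
  show "\<not> ev_const (repr S)" using y repr_eq_class ev_eq_ev_const ev_eq_sym by metis
  show "eq_class (repr S) = S" using y repr_eq_class eq_class_eqI by metis
qed

lemma Inr_in_carrier_not_ev_eq:
  "Inr S \<in> ext_carrier \<Longrightarrow> Inr S' \<in> ext_carrier \<Longrightarrow> S \<noteq> S' \<Longrightarrow> \<not> ev_eq (repr S) (repr S')"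
  using Inr_in_carrierD eq_class_eqI by metis

lemma point_in_carrier: "point y \<in> ext_carrier"
  by (auto simp: point_def ext_carrier_def)

lemma ext_mult_in_carrier: "ext_mult a b \<in> ext_carrier"
  by (cases a; cases b) (auto simp: point_in_carrier, auto simp: ext_carrier_def)

lemma ext_seq_point: "\<forall>\<^sub>F j in sequentially. ext_seq (point y) j = useq y j"
proof (cases "ev_const y")
  case True then show ?thesis using const_value[of y] by (simp add: point_def eq_commute)
next
  case False then show ?thesis using repr_eq_class[of y] by (simp add: point_def ev_eq_def)
qed

lemma ext_seq_ext_mult: "\<forall>\<^sub>F j in sequentially. ext_seq (ext_mult a b) j = ext_seq a j * ext_seq b j"
proof (cases a; cases b)
  fix x S assume "a = Inl x" "b = Inr S"
  then show ?thesis using ext_seq_point[of "mult1 (Some x) (repr S)"] by (simp add: useq_mult1_left)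
next
  fix x S assume "a = Inr S" "b = Inl x"
  then show ?thesis
    using ext_seq_point[of "mult1 (repr S) (Some x)"] by (simp add: useq_mult1_right)
next
  fix S S' assume "a = Inr S" "b = Inr S'"
  then show ?thesis by (simp add: useq_mult_useq)
qed auto

lemma ext_seq_inj:
  assumes "a \<in> ext_carrier" "b \<in> ext_carrier" "\<forall>\<^sub>F j in sequentially. ext_seq a j = ext_seq b j"
  shows "a = b"
proof (cases a; cases b)
  fix x x' assume "a = Inl x" "b = Inl x'"
  then show ?thesis using assms(3) by simp
next
  fix x S assume ab: "a = Inl x" "b = Inr S"
  then have "ev_const (repr S)" using assms(3) unfolding ev_const_def by (auto simp: eq_commute)
  then show ?thesis using Inr_in_carrierD assms(2) ab by blast
next
  fix x S assume ab: "a = Inr S" "b = Inl x"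
  then have "ev_const (repr S)" using assms(3) unfolding ev_const_def by auto
  then show ?thesis using Inr_in_carrierD assms(1) ab by blast
next
  fix S S' assume ab: "a = Inr S" "b = Inr S'"
  then have "ev_eq (repr S) (repr S')" using assms(3) by (simp add: ev_eq_def)
  then show ?thesis using Inr_in_carrier_not_ev_eq assms ab by blast
qed

lemma ext_mult_assoc: "ext_mult (ext_mult a b) c = ext_mult a (ext_mult b c)"
proof (rule ext_seq_inj[OF ext_mult_in_carrier ext_mult_in_carrier])
  show "\<forall>\<^sub>F j in sequentially. ext_seq (ext_mult (ext_mult a b) c) j = ext_seq (ext_mult a (ext_mult b c)) j"
    using ext_seq_ext_mult[of "ext_mult a b" c] ext_seq_ext_mult[of a b]
      ext_seq_ext_mult[of a "ext_mult b c"] ext_seq_ext_mult[of b c]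
    by eventually_elim (simp add: mult.assoc)
qed

text \<open>By comparability of the D's, two coincidences would make one of the sequences fixed
  by a root of e, hence by e, and so eventually constant.\<close>
lemma useq_no_two_coincidences:
  assumes ny: "\<not> ev_const y" and nz: "\<not> ev_const z" and neq: "\<not> ev_eq y z"
    and P1: "useq y j = useq z k" and P2: "useq y j' = useq z k'" and jj: "j < j'" and kk: "k < k'"
  shows False
proof -
  have case1: False if c: "c \<in> inf_root e" and h: "D k k' = c * D j j'" for c
  proof -
    have "useq z k' = c * (D j j' * useq y j)"
      using useq_step[OF kk, of z] h P1 by (simp add: mult.assoc)
    also have "\<dots> = c * useq y j'" using useq_step[OF jj, of y] by simp
    finally have "c * useq y j' = useq y j'" using P2 by simp
    then have "e * useq y j' = useq y j'" using inf_root_fixes c by blast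
    then show False using ev_constI ny by blast
  qed
  have case2: False if c: "c \<in> inf_root e" and h: "D j j' = c * D k k'" for c
  proof -
    have "useq y j' = c * (D k k' * useq z k)"
      using useq_step[OF jj, of y] h P1 by (simp add: mult.assoc)
    also have "\<dots> = c * useq z k'" using useq_step[OF kk, of z] by simp
    finally have "c * useq z k' = useq z k'" using P2 by simp
    then have "e * useq z k' = useq z k'" using inf_root_fixes c by blast
    then show False using ev_constI nz by blast
  qed
  consider "j = k" | "j < k" | "k < j" by linarith
  then show False
  proof cases
    case 1
    have "useq y l = useq z l" if "l \<ge> j" for l
    proof (cases "l = j")
      case False
      then have "j < l" using that by simp
      then show ?thesis using useq_step[of j l y] useq_step[of j l z] P1 1 by simp
    qed (use P1 1 in simp)
    then have "ev_eq y z" unfolding ev_eq_def eventually_sequentially by blast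
    then show False using neq by blast
  next
    case 2
    then obtain c where "c \<in> inf_root e" "D k k' = c * D j j' \<or> D j j' = c * D k k'"
      using D_comparable[OF 2 jj kk] by blast
    then show False using case1 case2 by blast
  next
    case 3
    then obtain c where "c \<in> inf_root e" "D j j' = c * D k k' \<or> D k k' = c * D j j'"
      using D_comparable[OF 3 kk jj] by blast
    then show False using case1 case2 by blast
  qed
qed

lemma eventually_distinct_values:
  assumes "\<not> ev_const y" "\<not> ev_const z" "\<not> ev_eq y z"
  shows "\<exists>J. \<forall>j\<ge>J. \<forall>k\<ge>J. useq y j \<noteq> useq z k"
proof (cases "\<exists>j k. useq y j = useq z k")
  case True
  then obtain j0 k0 where P: "useq y j0 = useq z k0" by blast
  have "useq y j \<noteq> useq z k" if "j \<ge> Suc (max j0 k0)" "k \<ge> Suc (max j0 k0)" for j k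
  proof -
    have "j0 < j" "k0 < k" using that by auto
    then show ?thesis using useq_no_two_coincidences[OF assms P, of j k] by blast
  qed
  then show ?thesis by blast
qed auto

lemma eventually_avoids_values:
  assumes "\<not> ev_const y" "\<not> ev_const z" "\<not> ev_eq y z"
  shows "\<exists>J. \<forall>k\<ge>J. \<forall>j\<ge>J0. useq y j \<noteq> useq z k"
proof -
  obtain J1 where J1: "\<forall>j\<ge>J1. \<forall>k\<ge>J1. useq y j \<noteq> useq z k"
    using eventually_distinct_values[OF assms] by blast
  define bad where "bad = (\<Union>j\<in>{..<J1}. {k. useq z k = useq y j})"
  have "finite bad" unfolding bad_def using not_ev_const_finite_preimage[OF assms(2)] by blast
  then obtain B where B: "\<forall>k\<in>bad. k < B" using finite_nat_set_iff_bounded by blast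
  have "useq y j \<noteq> useq z k" if "k \<ge> max J1 B" "j \<ge> J0" for j k
  proof (cases "j \<ge> J1")
    case True then show ?thesis using J1 that by auto
  next
    case False
    show ?thesis
    proof
      assume "useq y j = useq z k"
      moreover have "j \<in> {..<J1}" using False by simp
      ultimately have "k \<in> bad" unfolding bad_def by force
      then show False using B that by fastforce
    qed
  qed
  then show ?thesis by blast
qed

text \<open>Points of X are isolated, and a new point is the limit of its sequence.\<close>
definition ext_open :: "('a + 'a option set) set \<Rightarrow> bool" where
  "ext_open U \<longleftrightarrow> U \<subseteq> ext_carrier \<and>
     (\<forall>S. Inr S \<in> U \<longrightarrow> (\<forall>\<^sub>F j in sequentially. Inl (useq (repr S) j) \<in> U))"

lemma istopology_ext_open: "istopology ext_open"
  unfolding istopology_def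
proof safe
  fix S T assume "ext_open S" "ext_open T"
  then show "ext_open (S \<inter> T)" unfolding ext_open_def by (auto intro: eventually_conj)
next
  fix K assume h: "\<forall>K\<in>K. ext_open K"
  show "ext_open (\<Union>K)" unfolding ext_open_def
  proof safe
    fix x X assume "x \<in> X" "X \<in> K" then show "x \<in> ext_carrier"
      using h by (auto simp: ext_open_def)
  next
    fix S X assume "Inr S \<in> X" "X \<in> K"
    then have "\<forall>\<^sub>F j in sequentially. Inl (useq (repr S) j) \<in> X"
      using h by (auto simp: ext_open_def)
    then show "\<forall>\<^sub>F j in sequentially. Inl (useq (repr S) j) \<in> \<Union>K"
      by (rule eventually_mono) (use \<open>X \<in> K\<close> in blast)
  qed
qed

definition ext_topology :: "('a + 'a option set) topology" where "ext_topology = topology ext_open"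

lemma openin_ext_topology: "openin ext_topology U \<longleftrightarrow> ext_open U"
  by (simp add: ext_topology_def istopology_ext_open)

lemma ext_open_carrier: "ext_open ext_carrier"
  by (auto simp: ext_open_def ext_carrier_def)

lemma topspace_ext_topology: "topspace ext_topology = ext_carrier"
  unfolding topspace_def openin_ext_topology using ext_open_carrier by (auto simp: ext_open_def)

definition tail_nbhd :: "'a option set \<Rightarrow> nat \<Rightarrow> ('a + 'a option set) set" where
  "tail_nbhd S J = insert (Inr S) ((\<lambda>j. Inl (useq (repr S) j)) ` {J..})"

lemma ext_open_tail_nbhd: assumes "Inr S \<in> ext_carrier" shows "ext_open (tail_nbhd S J)"
  unfolding ext_open_def tail_nbhd_def
proof (intro conjI allI impI)
  show "insert (Inr S) ((\<lambda>j. Inl (useq (repr S) j)) ` {J..}) \<subseteq> ext_carrier"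
    using assms by (auto simp: ext_carrier_def)
next
  fix S' assume "Inr S' \<in> insert (Inr S) ((\<lambda>j. Inl (useq (repr S) j)) ` {J..})"
  then have "S' = S" by auto
  then show "\<forall>\<^sub>F j in sequentially. Inl (useq (repr S') j) \<in> insert (Inr S) ((\<lambda>j. Inl (useq (repr S) j)) ` {J..})"
    unfolding eventually_sequentially by auto
qed

lemma ext_open_Inl: "ext_open {Inl x}"
  by (auto simp: ext_open_def ext_carrier_def)

lemma ext_open_point: assumes "ext_open W" "point y \<in> W" shows "\<forall>\<^sub>F j in sequentially. Inl (useq y j) \<in> W"
proof (cases "ev_const y")
  case True
  then have "Inl (const_value y) \<in> W" using assms by (simp add: point_def)
  then show ?thesis using const_value[OF True] by (auto elim: eventually_mono)
next
  case False
  then have "Inr (eq_class y) \<in> W" using assms by (simp add: point_def)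
  then have "\<forall>\<^sub>F j in sequentially. Inl (useq (repr (eq_class y)) j) \<in> W"
    using assms(1) by (simp add: ext_open_def)
  then show ?thesis using repr_eq_class[of y] unfolding ev_eq_def by eventually_elim simp
qed

lemma ext_seq_tail_nbhd:
  assumes "a \<in> tail_nbhd S J"
  obtains f where "\<And>j. ext_seq a j = useq (repr S) (f j)"
proof -
  consider "a = Inr S" | k where "a = Inl (useq (repr S) k)"
    using assms unfolding tail_nbhd_def by blast
  then show ?thesis
  proof cases
    case 1
    then show ?thesis using that[of id] by simp
  next
    case (2 k)
    then show ?thesis using that[of "\<lambda>_. k"] by simp
  qed
qed

text \<open>Since u_j u_k = e, the product of two sequences of the form (u_j y)_j is constant.\<close>
lemma ext_mult_tail_nbhds:
  assumes "a \<in> tail_nbhd S J" and "b \<in> tail_nbhd S' J'"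
  shows "ext_mult a b = Inl (act1 e (mult1 (repr S) (repr S')))"
proof (rule ext_seq_inj[OF ext_mult_in_carrier])
  obtain f g where f: "\<And>j. ext_seq a j = useq (repr S) (f j)"
    and g: "\<And>j. ext_seq b j = useq (repr S') (g j)"
    using ext_seq_tail_nbhd assms by metis
  show "Inl (act1 e (mult1 (repr S) (repr S'))) \<in> ext_carrier" by (simp add: ext_carrier_def)
  show "\<forall>\<^sub>F j in sequentially. ext_seq (ext_mult a b) j = ext_seq (Inl (act1 e (mult1 (repr S) (repr S')))) j"
    using ext_seq_ext_mult[of a b] by eventually_elim (simp add: f g useq_mult_useq)
qed

lemma ext_mult_continuous_at:
  assumes a: "a \<in> ext_carrier" and b: "b \<in> ext_carrier" and W: "ext_open W" and ab: "ext_mult a b \<in> W"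
  shows "\<exists>U V. ext_open U \<and> ext_open V \<and> a \<in> U \<and> b \<in> V \<and> (\<forall>a'\<in>U. \<forall>b'\<in>V. ext_mult a' b' \<in> W)"
proof (cases a; cases b)
  fix x x' assume h: "a = Inl x" "b = Inl x'"
  show ?thesis
    by (rule exI[of _ "{a}"], rule exI[of _ "{b}"]) (use h ab ext_open_Inl in auto)
next
  fix x S assume h: "a = Inl x" "b = Inr S"
  let ?w = "mult1 (Some x) (repr S)"
  have "\<forall>\<^sub>F j in sequentially. Inl (useq ?w j) \<in> W"
    using ext_open_point[OF W] ab h by simp
  then obtain J where J: "\<forall>j\<ge>J. Inl (useq ?w j) \<in> W"
    by (auto simp: eventually_sequentially)
  have "\<forall>a'\<in>{a}. \<forall>b'\<in>tail_nbhd S J. ext_mult a' b' \<in> W"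
    using J ab h by (auto simp: tail_nbhd_def useq_mult1_left)
  then show ?thesis using ext_open_Inl ext_open_tail_nbhd b h by (metis insertI1 tail_nbhd_def)
next
  fix x S assume h: "a = Inr S" "b = Inl x"
  let ?w = "mult1 (repr S) (Some x)"
  have "\<forall>\<^sub>F j in sequentially. Inl (useq ?w j) \<in> W"
    using ext_open_point[OF W] ab h by simp
  then obtain J where J: "\<forall>j\<ge>J. Inl (useq ?w j) \<in> W"
    by (auto simp: eventually_sequentially)
  have "\<forall>a'\<in>tail_nbhd S J. \<forall>b'\<in>{b}. ext_mult a' b' \<in> W"
    using J ab h by (auto simp: tail_nbhd_def useq_mult1_right)
  then show ?thesis using ext_open_Inl ext_open_tail_nbhd a h by (metis insertI1 tail_nbhd_def)
next
  fix S S' assume h: "a = Inr S" "b = Inr S'"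
  have "\<forall>a'\<in>tail_nbhd S 0. \<forall>b'\<in>tail_nbhd S' 0. ext_mult a' b' \<in> W"
    using ab h ext_mult_tail_nbhds[of _ S 0 _ S' 0] ext_mult_tail_nbhds[of a S 0 b S' 0]
    by (simp add: tail_nbhd_def)
  then show ?thesis using ext_open_tail_nbhd a b h by (metis insertI1 tail_nbhd_def)
qed

lemma continuous_map_ext_mult:
  "continuous_map (prod_topology ext_topology ext_topology) ext_topology (\<lambda>(a, b). ext_mult a b)"
  unfolding continuous_map_def
proof (intro conjI allI impI)
  show "(\<lambda>(a, b). ext_mult a b) \<in> topspace (prod_topology ext_topology ext_topology) \<rightarrow>
      topspace ext_topology"
    by (auto simp: topspace_ext_topology ext_mult_in_carrier)
next
  fix W assume "openin ext_topology W"
  then have W: "ext_open W" by (simp add: openin_ext_topology)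
  show "openin (prod_topology ext_topology ext_topology)
      {z \<in> topspace (prod_topology ext_topology ext_topology). (case z of (a, b) \<Rightarrow> ext_mult a b) \<in> W}"
    (is "openin _ ?P")
    unfolding openin_prod_topology_alt
  proof (intro allI impI)
    fix a b assume "(a, b) \<in> ?P"
    then have "a \<in> ext_carrier" "b \<in> ext_carrier" "ext_mult a b \<in> W"
      by (auto simp: topspace_ext_topology)
    then obtain U V where UV: "ext_open U" "ext_open V" "a \<in> U" "b \<in> V"
      "\<forall>a'\<in>U. \<forall>b'\<in>V. ext_mult a' b' \<in> W"
      using ext_mult_continuous_at[OF _ _ W] by blast
    then have "U \<times> V \<subseteq> ?P" by (auto simp: topspace_ext_topology ext_open_def)
    then show "\<exists>U V. openin ext_topology U \<and> openin ext_topology V \<and> a \<in> U \<and> b \<in> V \<and> U \<times> V \<subseteq> ?P"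
      using UV by (auto simp: openin_ext_topology)
  qed
qed

lemma Hausdorff_ext_topology: "Hausdorff_space ext_topology"
  unfolding Hausdorff_space_def topspace_ext_topology openin_ext_topology
proof safe
  fix a b assume a: "a \<in> ext_carrier" and b: "b \<in> ext_carrier" and ne: "a \<noteq> b"
  show "\<exists>U V. ext_open U \<and> ext_open V \<and> a \<in> U \<and> b \<in> V \<and> disjnt U V"
  proof (cases a; cases b)
    fix x x' assume h: "a = Inl x" "b = Inl x'"
    show ?thesis by (rule exI[of _ "{a}"], rule exI[of _ "{b}"]) (use h ne ext_open_Inl in auto)
  next
    fix x S assume h: "a = Inl x" "b = Inr S"
    obtain J where J: "\<forall>j\<ge>J. useq (repr S) j \<noteq> x"
      using not_ev_const_avoids Inr_in_carrierD(1) b h by blast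
    have "disjnt {a} (tail_nbhd S J)" using J h by (auto simp: tail_nbhd_def disjnt_def)
    then show ?thesis
      using ext_open_Inl ext_open_tail_nbhd b h by (metis insertI1 singletonI tail_nbhd_def)
  next
    fix x S assume h: "a = Inr S" "b = Inl x"
    obtain J where J: "\<forall>j\<ge>J. useq (repr S) j \<noteq> x"
      using not_ev_const_avoids Inr_in_carrierD(1) a h by blast
    have "disjnt (tail_nbhd S J) {b}" using J h by (auto simp: tail_nbhd_def disjnt_def)
    then show ?thesis
      using ext_open_Inl ext_open_tail_nbhd a h by (metis insertI1 singletonI tail_nbhd_def)
  next
    fix S S' assume h: "a = Inr S" "b = Inr S'"
    have "\<not> ev_eq (repr S) (repr S')" using Inr_in_carrier_not_ev_eq a b h ne by blast
    then obtain J where J: "\<forall>j\<ge>J. \<forall>k\<ge>J. useq (repr S) j \<noteq> useq (repr S') k"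
      using eventually_distinct_values Inr_in_carrierD(1) a b h by blast
    have "disjnt (tail_nbhd S J) (tail_nbhd S' J)"
      using J h ne by (auto simp: tail_nbhd_def disjnt_def)
    then show ?thesis using ext_open_tail_nbhd a b h by (metis insertI1 tail_nbhd_def)
  qed
qed

lemma closedin_ext_topology: "closedin ext_topology V \<longleftrightarrow> V \<subseteq> ext_carrier \<and> ext_open (ext_carrier - V)"
  by (simp add: closedin_def topspace_ext_topology openin_ext_topology)

lemma ext_open_compl_Inl: "ext_open (ext_carrier - {Inl x})"
  unfolding ext_open_def
proof (intro conjI allI impI)
  fix S assume "Inr S \<in> ext_carrier - {Inl x}"
  then have "\<not> ev_const (repr S)" using Inr_in_carrierD(1) by blast
  then show "\<forall>\<^sub>F j in sequentially. Inl (useq (repr S) j) \<in> ext_carrier - {Inl x}"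
    by (rule not_ev_const_eventually_neq[THEN eventually_mono]) (simp add: ext_carrier_def)
qed blast

lemma ext_open_compl_tail_nbhd:
  assumes S: "Inr S \<in> ext_carrier"
  shows "ext_open (ext_carrier - tail_nbhd S J)"
  unfolding ext_open_def
proof (intro conjI allI impI)
  fix S' assume "Inr S' \<in> ext_carrier - tail_nbhd S J"
  then have S': "Inr S' \<in> ext_carrier" "S' \<noteq> S" unfolding tail_nbhd_def by auto
  then have "\<not> ev_eq (repr S) (repr S')" using Inr_in_carrier_not_ev_eq S by metis
  then obtain J' where J': "\<forall>k\<ge>J'. \<forall>j\<ge>J. useq (repr S) j \<noteq> useq (repr S') k"
    using eventually_avoids_values Inr_in_carrierD(1) S S'(1) by blast
  have "Inl (useq (repr S') k) \<in> ext_carrier - tail_nbhd S J" if "k \<ge> J'" for k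
    using J' that by (auto simp: tail_nbhd_def ext_carrier_def) (metis J' that)
  then show "\<forall>\<^sub>F k in sequentially. Inl (useq (repr S') k) \<in> ext_carrier - tail_nbhd S J"
    unfolding eventually_sequentially by blast
qed blast

lemma ext_topology_dim_le_0: "ext_topology dim_le 0"
  unfolding dimension_le_0_neighbourhood_base_of_clopen neighbourhood_base_of
    openin_ext_topology closedin_ext_topology
proof (intro allI impI)
  fix W a assume "ext_open W \<and> a \<in> W"
  then have W: "ext_open W" "a \<in> W" and a: "a \<in> ext_carrier" by (auto simp: ext_open_def)
  show "\<exists>U V. ext_open U \<and> ((V \<subseteq> ext_carrier \<and> ext_open (ext_carrier - V)) \<and> ext_open V) \<and>
      a \<in> U \<and> U \<subseteq> V \<and> V \<subseteq> W"
  proof (cases a)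
    case (Inl x)
    then show ?thesis using ext_open_Inl ext_open_compl_Inl a W(2) by blast
  next
    case (Inr S)
    then obtain J where "\<forall>j\<ge>J. Inl (useq (repr S) j) \<in> W"
      using W unfolding ext_open_def eventually_sequentially by blast
    then have "tail_nbhd S J \<subseteq> W" using W(2) Inr by (auto simp: tail_nbhd_def)
    moreover have "a \<in> tail_nbhd S J" using Inr by (simp add: tail_nbhd_def)
    moreover have "ext_open (tail_nbhd S J)" using ext_open_tail_nbhd a Inr by simp
    ultimately show ?thesis
      using ext_open_compl_tail_nbhd[of S J] a Inr unfolding ext_open_def by blast
  qed
qed

lemma embedding_map_Inl: "embedding_map (discrete_topology UNIV) ext_topology Inl"
proof -
  have sub: "subtopology ext_topology (range Inl) = discrete_topology (range Inl)"
    unfolding eq_commute[of _ "discrete_topology (range Inl)"] discrete_topology_unique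
  proof safe
    show "x \<in> topspace (subtopology ext_topology (range Inl)) \<Longrightarrow> x \<in> range Inl" for x
      by simp
    show "Inl x \<in> topspace (subtopology ext_topology (range Inl))" for x
      by (simp add: topspace_ext_topology ext_carrier_def)
    show "openin (subtopology ext_topology (range Inl)) {Inl x}" for x
      unfolding openin_subtopology using ext_open_Inl openin_ext_topology by blast
  qed
  show ?thesis unfolding embedding_map_def
    by (auto simp: sub homeomorphic_eq_everything_map open_map_def closed_map_def inj_on_def)
qed

lemma not_ev_const_None: "\<not> ev_const None"
proof
  assume "ev_const None"
  then obtain c J where "\<forall>j\<ge>J. useq None j = c"
    by (auto simp: ev_const_def eventually_sequentially)
  then have "u (Suc J) = u J" by (simp add: useq_def)
  then have "D J (Suc J) * u J = u J" using u_step[of J "Suc J"] by simp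
  then have "e * u J = u J" using inf_root_fixes D_root[of J "Suc J"] by simp
  then show False using u_not_fixed e_central by metis
qed

lemma not_closedin_range_Inl: "\<not> closedin ext_topology (range Inl)"
proof
  assume "closedin ext_topology (range Inl)"
  then have o: "ext_open (ext_carrier - range Inl)" by (simp add: closedin_ext_topology)
  have "Inr (eq_class None) \<in> ext_carrier - range Inl"
    using not_ev_const_None by (auto simp: ext_carrier_def)
  then have "\<forall>\<^sub>F j in sequentially. Inl (useq (repr (eq_class None)) j) \<in> ext_carrier - range Inl"
    using o unfolding ext_open_def by blast
  then show False by simp
qed

lemma TzS_ext_topology: "TzS ext_topology ext_mult"
  unfolding TzS_def using continuous_map_ext_mult Hausdorff_ext_topology ext_topology_dim_le_0
  by (simp add: ext_mult_assoc)

lemma not_TzS_closed: "\<not> TzS_closed TYPE('a)"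
proof (rule not_TzS_closedI[OF TzS_ext_topology _ embedding_map_Inl not_closedin_range_Inl
      inj_sum_to_set_set])
  show "Inl (x * y) = ext_mult (Inl x) (Inl y)" for x y by simp
  show "e \<noteq> u 0" using u_not_fixed[of 0] idem by auto
qed

end


section \<open>A chain of roots yields the data of the extension\<close>

locale root_chain =
  fixes e :: "'a::semigroup_mult" and x :: "nat \<Rightarrow> 'a" and N :: nat
  assumes idem: "e * e = e"
    and x_central: "\<And>n z. x n * z = z * x n"
    and x_root: "\<And>n. x n \<in> inf_root e"
    and x_not_fixed: "\<And>n. x n * e \<noteq> x n"
    and N_pos: "N \<ge> 1"
    and N_annihilates: "\<And>n t. t \<ge> 1 \<Longrightarrow> spow (x n) (N * t) * e = e"
    and x_spow_step: "\<And>n. \<exists>p\<ge>2. x n = spow (x (Suc n)) p"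
begin

lemma e_central: "e * z = z * e"
  using inf_root_commute_imp_commute x_root x_central by blast

definition p :: "nat \<Rightarrow> nat" where
  "p n = (SOME p. p \<ge> 2 \<and> x n = spow (x (Suc n)) p)"

lemma p_ge_2: "p n \<ge> 2" and x_eq_spow_p: "x n = spow (x (Suc n)) (p n)"
  using someI_ex[OF x_spow_step[of n]] by (auto simp: p_def)

definition Q :: "nat \<Rightarrow> nat \<Rightarrow> nat" where "Q a b = prod p {a..<b}"

lemma Q_pos: "Q a b \<ge> 1"
proof -
  have "\<And>n. 1 \<le> p n" using p_ge_2 by (metis one_le_numeral order_trans)
  then show ?thesis unfolding Q_def by (intro prod_ge_1) simp
qed

lemma Q_split: "a \<le> b \<Longrightarrow> b \<le> c \<Longrightarrow> Q a c = Q a b * Q b c"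
  unfolding Q_def by (simp add: prod.atLeastLessThan_concat)

lemma Q_refl [simp]: "Q a a = 1"
  by (simp add: Q_def)

lemma Q_Suc: "a \<le> b \<Longrightarrow> Q a (Suc b) = Q a b * p b"
  unfolding Q_def by (simp add: prod.atLeastLessThan_Suc)

lemma Q_ge_double: assumes "a < b" shows "Q a b \<ge> 2 * Q (Suc a) b"
proof -
  have "Q a b = Q a (Suc a) * Q (Suc a) b" using assms by (intro Q_split) auto
  also have "Q a (Suc a) = p a" using Q_Suc[of a a] by simp
  finally show ?thesis using p_ge_2[of a] by simp
qed

lemma Q_antimono: assumes "a \<le> b" "b \<le> L" shows "Q b L \<le> Q a L"
proof -
  have eq: "Q a L = Q a b * Q b L" using assms by (intro Q_split) auto
  have "1 * Q b L \<le> Q a b * Q b L" by (rule mult_le_mono1[OF Q_pos])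
  then show ?thesis unfolding eq by simp
qed

lemma Q_ge_power: "Q 0 m \<ge> 2 ^ m"
proof (induction m)
  case (Suc m)
  have "Q 0 (Suc m) = Q 0 m * p m" using Q_Suc by simp
  then show ?case using mult_le_mono[OF Suc.IH p_ge_2[of m]] by (simp add: mult.commute)
qed simp

lemma x_eq_spow_Q: "a \<le> b \<Longrightarrow> x a = spow (x b) (Q a b)"
proof (induction b rule: dec_induct)
  case (step n)
  have "x a = spow (spow (x (Suc n)) (p n)) (Q a n)" using step x_eq_spow_p[of n] by simp
  also have "\<dots> = spow (x (Suc n)) (p n * Q a n)"
    using spow_mult[of "p n" "Q a n" "x (Suc n)"] p_ge_2[of n] Q_pos[of a n] by simp
  finally show ?case using Q_Suc[OF step(1)] by (simp add: mult.commute)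
qed simp

lemma spow_x_eq_spow_Q: "a \<le> b \<Longrightarrow> i \<ge> 1 \<Longrightarrow> spow (x a) i = spow (x b) (Q a b * i)"
  using x_eq_spow_Q spow_mult Q_pos by metis

definition m :: nat where "m = 4 * N"

lemma Q_0_m: "Q 0 m \<ge> 4 * N"
proof -
  have "4 * N < 2 ^ (4 * N)" by (rule less_exp)
  then show ?thesis using Q_ge_power[of m] unfolding m_def by linarith
qed

definition M :: nat where "M = (LEAST i. 1 \<le> i \<and> spow (x m) i * e = spow (x m) i)"

lemma M_ex: "\<exists>i. 1 \<le> i \<and> spow (x m) i * e = spow (x m) i"
  using x_root[of m] idem by (auto simp: inf_root_def)

lemma M_ge_1: "1 \<le> M" and spow_M_fixed: "spow (x m) M * e = spow (x m) M"
  using LeastI_ex[OF M_ex] unfolding M_def by auto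

lemma spow_less_M_not_fixed: "1 \<le> i \<Longrightarrow> i < M \<Longrightarrow> spow (x m) i * e \<noteq> spow (x m) i"
  using not_less_Least unfolding M_def by blast

lemma M_gt: "M > 4 * N"
proof -
  have "M > Q 0 m"
  proof (rule ccontr)
    assume "\<not> M > Q 0 m"
    then have "spow (x m) (Q 0 m) * e = spow (x m) (Q 0 m)"
      using spow_fixed_mono[OF _ M_ge_1 _ spow_M_fixed] e_central by simp
    then show False using x_eq_spow_Q[of 0 m] x_not_fixed[of 0] by simp
  qed
  then show ?thesis using Q_0_m by simp
qed

definition q :: nat where "q = (M - 1) div N"
definition c :: nat where "c = N * q"

lemma c_bounds: "c \<le> M - 1" "M \<le> 2 * (c - N)" "N < c"
proof -
  have a: "N * q + (M - 1) mod N = M - 1" unfolding q_def by (metis mult_div_mod_eq)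
  have b: "(M - 1) mod N < N" using N_pos by simp
  have c1: "c \<le> M - 1" "M \<le> c + N" using a b unfolding c_def by linarith+
  then show "c \<le> M - 1" by simp
  show "M \<le> 2 * (c - N)" using c1 M_gt by linarith
  show "N < c" using c1 M_gt by linarith
qed

text \<open>x_m^M is the first power of x_m in H_e and c is the largest multiple of N below M, so
  u_j behaves like x_m^c x_(m+j)^(-N): a product of two u's has an exponent that is divisible
  by N and at least M Q, hence equals e, whereas u_j alone stays below the exponent M Q.\<close>
definition u :: "nat \<Rightarrow> 'a" where
  "u j = spow (x (m + j)) (c * Q m (m + j) - N)"

definition D :: "nat \<Rightarrow> nat \<Rightarrow> 'a" where
  "D j i = spow (x (m + i)) (N * (Q (m + j) (m + i) - 1))"

lemma u_eq_spow:
  assumes "m + j \<le> L"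
  shows "u j = spow (x L) (c * Q m L - N * Q (m + j) L)" "c * Q m L - N * Q (m + j) L \<ge> 1"
    "N * Q (m + j) L \<le> N * Q m L"
proof -
  let ?A = "Q m (m + j)" and ?B = "Q (m + j) L"
  have AB: "Q m L = ?A * ?B" using assms by (intro Q_split) auto
  have "c \<le> c * ?A" using Q_pos[of m "m+j"] by simp
  then have E1: "c * ?A - N \<ge> 1" using c_bounds(3) by linarith
  have "u j = spow (x L) (?B * (c * ?A - N))" unfolding u_def using spow_x_eq_spow_Q[OF assms E1] .
  also have "?B * (c * ?A - N) = c * Q m L - N * ?B" unfolding AB
    by (simp add: diff_mult_distrib2 mult_ac)
  finally show "u j = spow (x L) (c * Q m L - N * Q (m + j) L)" .
  have "?B * (c * ?A - N) \<ge> 1" using E1 Q_pos[of "m+j" L] by (simp add: Suc_le_eq)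
  then show "c * Q m L - N * Q (m + j) L \<ge> 1"
    using \<open>?B * (c * ?A - N) = c * Q m L - N * ?B\<close> by simp
  show "N * Q (m + j) L \<le> N * Q m L" using Q_antimono[of m "m+j" L] assms by simp
qed

lemma D_eq_spow:
  assumes "j < i" "m + i \<le> L"
  shows "D j i = spow (x L) (N * (Q (m + j) L - Q (m + i) L))"
proof -
  let ?A = "Q (m + j) (m + i)" and ?B = "Q (m + i) L"
  have AB: "Q (m + j) L = ?A * ?B" using assms by (intro Q_split) auto
  have A2: "?A \<ge> 2"
    using Q_ge_double[of "m+j" "m+i"] Q_pos[of "Suc (m+j)" "m+i"] assms by linarith
  have E1: "N * (?A - 1) \<ge> 1" using N_pos A2 by (simp add: Suc_le_eq)
  have "D j i = spow (x L) (?B * (N * (?A - 1)))" unfolding D_def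
    using spow_x_eq_spow_Q[OF assms(2) E1] .
  also have "?B * (N * (?A - 1)) = N * (Q (m + j) L - ?B)" unfolding AB
    by (simp add: diff_mult_distrib2 mult_ac)
  finally show ?thesis .
qed

lemma u_central: "u j * z = z * u j"
  unfolding u_def using spow_commute x_central by blast

lemma u_mult_u: "u j * u i = e"
proof -
  define L where "L = m + max j i"
  let ?Z = "Q m L"
  have Lj: "m + j \<le> L" and Li: "m + i \<le> L" unfolding L_def by auto
  define E1 where "E1 = c * ?Z - N * Q (m + j) L"
  define E2 where "E2 = c * ?Z - N * Q (m + i) L"
  have uj: "u j = spow (x L) E1" "E1 \<ge> 1" "N * Q (m + j) L \<le> N * ?Z"
    using u_eq_spow[OF Lj] unfolding E1_def by auto
  have ui: "u i = spow (x L) E2" "E2 \<ge> 1" "N * Q (m + i) L \<le> N * ?Z"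
    using u_eq_spow[OF Li] unfolding E2_def by auto
  have prod: "u j * u i = spow (x L) (E1 + E2)" by (simp only: uj(1) ui(1) spow_add[OF uj(2) ui(2)])
  have cz: "(c - N) * ?Z = c * ?Z - N * ?Z" by (simp add: diff_mult_distrib)
  have low1: "E1 \<ge> (c - N) * ?Z" unfolding E1_def cz by (rule diff_le_mono2[OF uj(3)])
  have low2: "E2 \<ge> (c - N) * ?Z" unfolding E2_def cz by (rule diff_le_mono2[OF ui(3)])
  have "M * ?Z \<le> 2 * (c - N) * ?Z" using c_bounds(2) by simp
  then have big: "M * ?Z \<le> E1 + E2" using low1 low2 by linarith
  have mZ: "M * ?Z \<ge> 1" using M_ge_1 Q_pos[of m L] by simp
  have "spow (x m) M = spow (x L) (?Z * M)" using spow_x_eq_spow_Q[of m L M] Lj M_ge_1 by simp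
  then have "spow (x L) (M * ?Z) * e = spow (x L) (M * ?Z)"
    using spow_M_fixed by (simp add: mult.commute)
  then have fx: "spow (x L) (E1 + E2) * e = spow (x L) (E1 + E2)"
    using spow_fixed_mono[OF _ mZ big] e_central by blast
  define t1 where "t1 = q * ?Z - Q (m + j) L"
  define t2 where "t2 = q * ?Z - Q (m + i) L"
  have "E1 = N * t1" unfolding E1_def t1_def c_def by (simp add: diff_mult_distrib2 mult_ac)
  moreover have "E2 = N * t2" unfolding E2_def t2_def c_def
    by (simp add: diff_mult_distrib2 mult_ac)
  ultimately have Et: "E1 + E2 = N * (t1 + t2)" by (simp add: add_mult_distrib2)
  have "t1 + t2 \<ge> 1" using uj(2) \<open>E1 = N * t1\<close> by (cases t1) auto
  then have "spow (x L) (E1 + E2) = e" using N_annihilates fx Et by simp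
  then show ?thesis using prod by simp
qed

lemma u_step: "j < i \<Longrightarrow> u i = D j i * u j"
proof -
  assume ji: "j < i"
  define L where "L = m + i"
  have Lj: "m + j \<le> L" and Li: "m + i \<le> L" using ji unfolding L_def by auto
  let ?Z = "Q m L" and ?W = "Q (m + j) L"
  have ui: "u i = spow (x L) (c * ?Z - N)" using u_eq_spow(1)[OF Li] unfolding L_def by simp
  have uj: "u j = spow (x L) (c * ?Z - N * ?W)" "c * ?Z - N * ?W \<ge> 1"
    using u_eq_spow[OF Lj] by auto
  have W2: "?W \<ge> 2"
    using Q_ge_double[of "m+j" L] Q_pos[of "Suc (m+j)" L] ji unfolding L_def by linarith
  have Dl: "D j i = spow (x L) (N * (?W - 1))" using D_eq_spow[OF ji Li] unfolding L_def by simp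
  have D1: "N * (?W - 1) \<ge> 1" using N_pos W2 by (simp add: Suc_le_eq)
  have "D j i * u j = spow (x L) (N * (?W - 1) + (c * ?Z - N * ?W))"
    by (simp only: Dl uj(1) spow_add[OF D1 uj(2)])
  also have "N * (?W - 1) + (c * ?Z - N * ?W) = c * ?Z - N"
  proof -
    have "N * (?W - 1) = N * ?W - N" by (simp add: diff_mult_distrib2)
    moreover have "N \<le> N * ?W" using W2 by simp
    ultimately show ?thesis using uj(2) by linarith
  qed
  finally show ?thesis using ui by simp
qed

lemma D_mult_e: "j < i \<Longrightarrow> D j i * e = e"
proof -
  assume ji: "j < i"
  have "Q (m + j) (m + i) \<ge> 2"
    using Q_ge_double[of "m+j" "m+i"] Q_pos[of "Suc (m+j)" "m+i"] ji by linarith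
  then show ?thesis unfolding D_def using N_annihilates by simp
qed

lemma D_root: "j < i \<Longrightarrow> D j i \<in> inf_root e"
proof -
  assume ji: "j < i"
  have "Q (m + j) (m + i) \<ge> 2"
    using Q_ge_double[of "m+j" "m+i"] Q_pos[of "Suc (m+j)" "m+i"] ji by linarith
  then have "N * (Q (m + j) (m + i) - 1) \<ge> 1" using N_pos by (simp add: Suc_le_eq)
  then show ?thesis unfolding D_def by (rule spow_in_inf_root[OF idem x_root])
qed

lemma u_not_fixed: "u j * e \<noteq> u j"
proof
  assume fx: "u j * e = u j"
  define L where "L = m + j"
  let ?Z = "Q m L"
  have uj: "u j = spow (x L) (c * ?Z - N * 1)" using u_eq_spow(1)[of j L] unfolding L_def by simp
  have E1: "c * ?Z - N * 1 \<ge> 1" using u_eq_spow(2)[of j L] unfolding L_def by simp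
  have "c * ?Z \<le> ?Z * (M - 1)"
    using mult_le_mono1[OF c_bounds(1), of ?Z] by (simp add: mult.commute)
  then have le: "c * ?Z - N * 1 \<le> ?Z * (M - 1)" by linarith
  have fx2: "spow (x L) (c * ?Z - N * 1) * e = spow (x L) (c * ?Z - N * 1)" using fx uj by simp
  have f1: "spow (x L) (?Z * (M - 1)) * e = spow (x L) (?Z * (M - 1))"
    by (rule spow_fixed_mono[OF _ E1 le fx2]) (rule e_central)
  have f2: "spow (x m) (M - 1) = spow (x L) (?Z * (M - 1))"
    using spow_x_eq_spow_Q[of m L "M - 1"] M_gt N_pos unfolding L_def by simp
  have "1 \<le> M - 1" "M - 1 < M" using M_gt N_pos by auto
  then have "spow (x m) (M - 1) * e \<noteq> spow (x m) (M - 1)" by (rule spow_less_M_not_fixed)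
  then show False using f1 f2 by simp
qed

lemma D_comparable:
  assumes jk: "j < k" and jj: "j < j'" and kk: "k < k'"
  shows "\<exists>c. c \<in> inf_root e \<and> (D k k' = c * D j j' \<or> D j j' = c * D k k')"
proof -
  define L where "L = m + max j' k'"
  have L1: "m + j' \<le> L" "m + k' \<le> L" unfolding L_def by auto
  let ?W = "\<lambda>i. Q (m + i) L"
  have dj: "D j j' = spow (x L) (N * (?W j - ?W j'))" using D_eq_spow[OF jj L1(1)] .
  have dk: "D k k' = spow (x L) (N * (?W k - ?W k'))" using D_eq_spow[OF kk L1(2)] .
  have w1: "?W j \<ge> 2 * ?W (Suc j)" using Q_ge_double[of "m+j" L] L1 jj by simp
  have w2: "?W j' \<le> ?W (Suc j)" using Q_antimono[of "m + Suc j" "m + j'" L] L1 jj by simp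
  have w3: "?W k \<le> ?W (Suc j)" using Q_antimono[of "m + Suc j" "m + k" L] L1 jk kk by simp
  have w4: "?W k \<ge> 2 * ?W (Suc k)" using Q_ge_double[of "m+k" L] L1 kk by simp
  have w5: "?W k' \<le> ?W (Suc k)" using Q_antimono[of "m + Suc k" "m + k'" L] L1 kk by simp
  have w6: "?W k' \<ge> 1" by (rule Q_pos)
  have w7: "?W (Suc j) \<ge> 1" by (rule Q_pos)
  have a1: "?W (Suc j) \<le> ?W j - ?W j'" using w1 w2 by linarith
  have b0: "?W k' \<le> ?W k" using w4 w5 by linarith
  have b1: "?W k - ?W k' < ?W k" using b0 w6 by linarith
  have lt: "?W k - ?W k' < ?W j - ?W j'" using a1 b1 w3 by linarith
  have pos: "?W k - ?W k' \<ge> 1" using w4 w5 w6 by linarith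
  define A where "A = N * (?W j - ?W j')"
  define B where "B = N * (?W k - ?W k')"
  have BA: "B < A" unfolding A_def B_def using lt N_pos by simp
  have B1: "B \<ge> 1" unfolding B_def using pos N_pos by (simp add: Suc_le_eq)
  have AB1: "A - B \<ge> 1" using BA by simp
  have dj': "D j j' = spow (x L) ((A - B) + B)" using dj BA unfolding A_def by simp
  have dkB: "D k k' = spow (x L) B" using dk unfolding B_def .
  have "spow (x L) ((A - B) + B) = spow (x L) (A - B) * D k k'"
    by (simp only: spow_add[OF AB1 B1] dkB)
  with dj' have "D j j' = spow (x L) (A - B) * D k k'" by simp
  then show ?thesis using spow_in_inf_root[OF idem x_root AB1] by blast
qed

end

sublocale root_chain \<subseteq> limit_extension e u D
  by unfold_locales
    (fact idem e_central u_central u_mult_u u_step D_mult_e D_root u_not_fixed D_comparable)+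

theorem lemma5p7:
  fixes e :: "'a::semigroup_mult" and x :: "nat \<Rightarrow> 'a"
  assumes "TzS_closed TYPE('a)"
    and "e \<in> idempotents"
    and "bounded_subsemigroup (maxsubgroup e \<inter> center)"
    and "\<And>n. x n \<in> (inf_root e \<inter> center) - maxsubgroup e"
  shows "\<exists>n. x n \<notin> {spow (x (Suc n)) p | p. p \<ge> 2}"
proof (rule ccontr)
  assume "\<not> (\<exists>n. x n \<notin> {spow (x (Suc n)) p | p. p \<ge> 2})"
  then have step: "\<exists>p\<ge>2. x n = spow (x (Suc n)) p" for n by blast
  have idem: "e * e = e" using assms(2) by (simp add: idempotents_def)
  have root: "x n \<in> inf_root e" and central: "x n * z = z * x n" and not_H: "x n \<notin> maxsubgroup e"
    for n z using assms(4)[of n] by (auto simp: center_def)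
  obtain N where "N \<ge> 1" and bound: "\<forall>g \<in> maxsubgroup e \<inter> center. spow g N * spow g N = spow g N"
    using assms(3) unfolding bounded_subsemigroup_def by blast
  interpret root_chain e x N
  proof
    show "x n * e \<noteq> x n" for n by (rule central_root_not_fixed[OF idem root central not_H])
    show "t \<ge> 1 \<Longrightarrow> spow (x n) (N * t) * e = e" for n t
      by (rule spow_exponent_mult_e[OF idem \<open>N \<ge> 1\<close> bound root central])
  qed (fact idem root central \<open>N \<ge> 1\<close> step)+
  show False using not_TzS_closed assms(1) by blast
qed

end
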